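(* Let $m\ge 1$ and let $(a_0,\dots,a_{m-1})$ be a finite sequence of non-negative integers with P-G triangle entries $d_k^{(j)}$. Let $B_j=d_{m-j}^{(j-1)}$ for $1\le j\le m$ be the entries of its eastern edge (so $B_1=a_{m-1}$ and $B_m=d_0^{(m-1)}$), and suppose $0\le B_1\le B_2\le\cdots\le B_m$. Then for every integer $Z\ge 0$ there exists an integer $C_1\ge B_1$ such that, in the P-G triangle generated by the extended sequence $(a_0,\dots,a_{m-1},C_1)$, the entries $C_j:=d_{m+1-j}^{(j-1)}$ ($1\le j\le m+1$) of its new eastern edge satisfy $C_j\ge B_j$ for $1\le j\le m$ and $C_{m+1}=Z$.
   Context: For a finite or infinite sequence $\mathfrak u=(a_0,a_1,\dots)$ of non-negative integers, the P-G triangle generated by $\mathfrak u$ consists of the numbers $d_k^{(j)}$ defined by $d_k^{(0)}=a_k$ and $d_k^{(j+1)}=|d_{k+1}^{(j)}-d_k^{(j)}|$ for $j,k\ge 0$ (for a finite sequence $(a_0,\dots,a_{N-1})$ these are defined for $0\le k\le N-1-j$). *)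

theory Defs
  imports Main
begin

text \<open>Entries are meaningful for k + j \<le> N - 1 (they only involve a_k,...,a_{k+j}).\<close>

fun pg :: "nat list \<Rightarrow> nat \<Rightarrow> nat \<Rightarrow> nat" where
  "pg xs 0 k = xs ! k"
| "pg xs (Suc j) k = nat \<bar>int (pg xs j (Suc k)) - int (pg xs j k)\<bar>"

end

theory Submission
  imports Defs
begin

text \<open>Appending C to a row of length m adds a new eastern edge C_1 = C, C_(j+1) = |C_j - B_j|.
  Choosing C = Z + B_1 + ... + B_m keeps every C_j above B_j, since then
  C_j = Z + B_j + ... + B_m and each difference merely peels off one summand;
  in particular C_(m+1) = Z.\<close>

text \<open>Zero-based: east_edge xs i is B_(i+1).\<close>

definition east_edge :: "nat list \<Rightarrow> nat \<Rightarrow> nat" where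
  "east_edge xs i = pg xs i (length xs - Suc i)"

lemma pg_append: "k + j < length xs \<Longrightarrow> pg (xs @ ys) j k = pg xs j k"
  by (induction j arbitrary: k) (simp_all add: nth_append)

lemma east_edge_append_0: "east_edge (xs @ [c]) 0 = c"
  by (simp add: east_edge_def)

lemma east_edge_append_Suc:
  assumes "i < length xs"
  shows "east_edge (xs @ [c]) (Suc i) = nat \<bar>int (east_edge (xs @ [c]) i) - int (east_edge xs i)\<bar>"
proof -
  have "Suc (length xs - Suc i) = length xs - i"
    using assms by simp
  then show ?thesis
    using assms by (simp add: east_edge_def pg_append)
qed

lemma east_edge_append_sum:
  assumes "t \<le> length xs"
  shows "east_edge (xs @ [z + (\<Sum>i<length xs. east_edge xs i)]) t
           = z + (\<Sum>i\<in>{t..<length xs}. east_edge xs i)"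
  using assms
proof (induction t)
  case 0
  then show ?case by (simp add: east_edge_append_0 atLeast0LessThan)
next
  case (Suc t)
  define c where "c = z + (\<Sum>i<length xs. east_edge xs i)"
  define rest where "rest = z + (\<Sum>i\<in>{Suc t..<length xs}. east_edge xs i)"
  have "{t..<length xs} = insert t {Suc t..<length xs}"
    using Suc.prems by auto
  then have "east_edge (xs @ [c]) t = east_edge xs t + rest"
    using Suc by (simp add: c_def rest_def)
  then have "east_edge (xs @ [c]) (Suc t) = nat \<bar>int (east_edge xs t + rest) - int (east_edge xs t)\<bar>"
    using Suc.prems by (simp add: east_edge_append_Suc)
  then have "east_edge (xs @ [c]) (Suc t) = rest"
    by simp
  then show ?case
    unfolding c_def rest_def .
qed

theorem proposition3p3:
  fixes xs :: "nat list" and Z :: nat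
  assumes "length xs = m" and "m \<ge> 1"
    and "\<And>j. 1 \<le> j \<Longrightarrow> j < m \<Longrightarrow> pg xs (j - 1) (m - j) \<le> pg xs j (m - (j + 1))"
  shows "\<exists>C1::nat. C1 \<ge> pg xs 0 (m - 1) \<and>
           (\<forall>j. 1 \<le> j \<and> j \<le> m \<longrightarrow> pg (xs @ [C1]) (j - 1) (m + 1 - j) \<ge> pg xs (j - 1) (m - j)) \<and>
           pg (xs @ [C1]) m 0 = Z"
proof (intro exI conjI allI impI)
  define C1 where "C1 = Z + (\<Sum>i<m. east_edge xs i)"
  have C: "east_edge (xs @ [C1]) t = Z + (\<Sum>i\<in>{t..<m}. east_edge xs i)" if "t \<le> m" for t
    using east_edge_append_sum[of t xs Z] that assms(1) by (simp add: C1_def)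
  have B_le: "east_edge xs t \<le> Z + (\<Sum>i\<in>{t..<m}. east_edge xs i)" if "t < m" for t
    using that by (simp add: trans_le_add2 member_le_sum)
  show "pg xs 0 (m - 1) \<le> C1"
    using C[of 0] B_le[of 0] assms east_edge_append_0[of xs C1]
    by (simp add: east_edge_def)
  show "pg (xs @ [C1]) m 0 = Z"
    using C[of m] assms(1) by (simp add: east_edge_def)
  fix j assume j: "1 \<le> j \<and> j \<le> m"
  then have "j - 1 < m" "m + 1 - j = Suc (m - j)"
    by auto
  then show "pg xs (j - 1) (m - j) \<le> pg (xs @ [C1]) (j - 1) (m + 1 - j)"
    using j C[of "j - 1"] B_le[of "j - 1"] assms(1) by (simp add: east_edge_def)
qed

end
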